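(* Let $0<p\le\infty$ and $E=\mathcal{L}^p(I)$. If each scale function $\alpha_n$, $n=1,\dots,N$, is non-null almost everywhere, then the linear operator $\mathcal{P}_0^1:E\to E$, $\mathcal{P}_0^1(b):=0*_Tb$, is injective.
   Context: Let $N\ge 2$, $I=[x_0,x_N]$, $\Delta: x_0<\dots<x_N$ a partition, $L_n(x)=a_nx+b_n$ affine with $L_n(x_0)=x_{n-1}$, $L_n(x_N)=x_n$, $I_1=[x_0,x_1]$, $I_n=(x_{n-1},x_n]$ for $n\ge2$, and $\alpha=(\alpha_1,\dots,\alpha_N)\in(\mathcal{L}^\infty(I))^N$ with $\Lambda:=\operatorname{ess\,sup}\{|\alpha_n(x)|:x\in I,n=1,\dots,N\}<1$. For $f,b\in E$, the fractal convolution $f*_Tb$ is the unique fixed point in $E$ of the contraction $Tg(x):=f(x)+\alpha_n(L_n^{-1}(x))(g-b)(L_n^{-1}(x))$, $x\in I_n$; $0$ denotes the null function. *)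

theory Defs
  imports "HOL-Analysis.Analysis"
begin

definition piece :: "(nat \<Rightarrow> real) \<Rightarrow> nat \<Rightarrow> real set" where
  "piece x n = (if n = 1 then {x 0 .. x 1} else {x (n - 1) <.. x n})"

text \<open>Membership in L^p(I) for 0 < p \<le> \<infinity> (w.r.t. Lebesgue measure on I);
  elements of L^p are identified up to a.e. equality (handled via AE in the statement).\<close>

definition in_Lp :: "ennreal \<Rightarrow> real set \<Rightarrow> (real \<Rightarrow> real) \<Rightarrow> bool" where
  "in_Lp p I f \<longleftrightarrow> f \<in> borel_measurable (lebesgue_on I) \<and>
     (if p = \<infinity> then (\<exists>C. AE t in lebesgue_on I. \<bar>f t\<bar> \<le> C)
      else (\<integral>\<^sup>+ t. ennreal (\<bar>f t\<bar> powr enn2real p) \<partial>(lebesgue_on I)) < \<infinity>)"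

text \<open>h is (a representative of) the fractal convolution f *_T b, i.e. the fixed point
  of T in L^p(I): h \<in> L^p(I) and h = T h almost everywhere on I, where on I_n
  (T g)(y) = f(y) + \<alpha>_n(L_n^{-1} y) (g - b)(L_n^{-1} y), L_n(t) = a_n t + c_n.\<close>

definition is_fractal_conv ::
  "ennreal \<Rightarrow> nat \<Rightarrow> (nat \<Rightarrow> real) \<Rightarrow> (nat \<Rightarrow> real) \<Rightarrow> (nat \<Rightarrow> real) \<Rightarrow>
   (nat \<Rightarrow> real \<Rightarrow> real) \<Rightarrow> (real \<Rightarrow> real) \<Rightarrow> (real \<Rightarrow> real) \<Rightarrow> (real \<Rightarrow> real) \<Rightarrow> bool" where
  "is_fractal_conv p N x a c \<alpha> f b h \<longleftrightarrow>
     in_Lp p {x 0 .. x N} h \<and>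
     (\<forall>n \<in> {1..N}. AE y in lebesgue. y \<in> piece x n \<longrightarrow>
        h y = f y + \<alpha> n ((y - c n) / a n) * (h ((y - c n) / a n) - b ((y - c n) / a n)))"

end

theory Submission
  imports Defs
begin

text \<open>Since \<open>L\<^sub>1\<close> maps \<open>I\<close> onto \<open>I\<^sub>1\<close>, the fixed point
  equation of \<open>0 *\<^sub>T b\<close> on \<open>I\<^sub>1\<close>, pulled back along \<open>L\<^sub>1\<close>, reads
  \<open>h (L\<^sub>1 u) = \<alpha>\<^sub>1 u (h u - b u)\<close> for almost every \<open>u \<in> I\<close>. As \<open>\<alpha>\<^sub>1 \<noteq> 0\<close> a.e., this
  recovers \<open>b = h - (h \<circ> L\<^sub>1) / \<alpha>\<^sub>1\<close> a.e. from \<open>h\<close>, so equal convolutions have equal bases.\<close>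

lemma AE_lebesgue_affine:
  fixes P :: "real \<Rightarrow> bool"
  assumes "c \<noteq> 0" and "AE y in lebesgue. P y"
  shows "AE u in lebesgue. P (t + c * u)"
proof -
  have "AE y in density (distr lebesgue lebesgue (\<lambda>u. t + c * u)) (\<lambda>_. ennreal \<bar>c\<bar>). P y"
    using assms(2) by (subst (asm) lebesgue_real_affine[OF assms(1), of t])
  then have "AE y in distr lebesgue lebesgue (\<lambda>u. t + c * u). P y"
    using assms(1) by (simp add: AE_density)
  then show ?thesis
    by (rule AE_distrD[rotated]) (use lebesgue_affine_measurable[where c="\<lambda>_. c" and t=t] assms(1) in simp)
qed

lemma first_map_pos:
  fixes x :: "nat \<Rightarrow> real"
  assumes "x 0 < x 1" "x 1 \<le> x N" "a * x 0 + c = x 0" "a * x N + c = x 1"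
  shows "0 < a"
proof -
  have "a * (x N - x 0) = x 1 - x 0"
    using assms(3,4) by (simp add: algebra_simps)
  with assms(1,2) show ?thesis
    by (metis diff_gt_0_iff_gt order_less_le_trans zero_less_mult_pos2)
qed

lemma first_map_into_first_piece:
  fixes x :: "nat \<Rightarrow> real"
  assumes "x 0 < x 1" "x 1 \<le> x N" "a * x 0 + c = x 0" "a * x N + c = x 1"
    and "u \<in> {x 0 .. x N}"
  shows "c + a * u \<in> piece x 1"
proof -
  have "0 < a" using assms(1-4) by (rule first_map_pos)
  with assms(5) have "a * x 0 \<le> a * u" "a * u \<le> a * x N"
    by (auto intro: mult_left_mono)
  with assms(3,4) show ?thesis
    unfolding piece_def by simp
qed

lemma fractal_conv_zero_pullback_first_piece:
  assumes "is_fractal_conv p N x a c \<alpha> (\<lambda>_. 0) b h" and "1 \<le> N" and "a 1 \<noteq> 0"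
  shows "AE u in lebesgue. c 1 + a 1 * u \<in> piece x 1 \<longrightarrow>
           h (c 1 + a 1 * u) = \<alpha> 1 u * (h u - b u)"
proof -
  have "AE y in lebesgue. y \<in> piece x 1 \<longrightarrow>
          h y = 0 + \<alpha> 1 ((y - c 1) / a 1) * (h ((y - c 1) / a 1) - b ((y - c 1) / a 1))"
    using assms(1,2) unfolding is_fractal_conv_def by auto
  from AE_lebesgue_affine[OF assms(3) this, of "c 1"] show ?thesis
    using assms(3) by simp
qed

theorem proposition6p1:
  fixes p :: ennreal and N :: nat and x a c :: "nat \<Rightarrow> real"
    and \<alpha> :: "nat \<Rightarrow> real \<Rightarrow> real"
  assumes p_pos: "0 < p"
    and N: "N \<ge> 2"
    and x_mono: "\<And>i j. i < j \<Longrightarrow> j \<le> N \<Longrightarrow> x i < x j"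
    and L_left: "\<And>n. n \<in> {1..N} \<Longrightarrow> a n * x 0 + c n = x (n - 1)"
    and L_right: "\<And>n. n \<in> {1..N} \<Longrightarrow> a n * x N + c n = x n"
    and \<alpha>_meas: "\<And>n. n \<in> {1..N} \<Longrightarrow> \<alpha> n \<in> borel_measurable (lebesgue_on {x 0 .. x N})"
    and \<Lambda>: "\<exists>\<Lambda> < 1. \<forall>n \<in> {1..N}. AE t in lebesgue_on {x 0 .. x N}. \<bar>\<alpha> n t\<bar> \<le> \<Lambda>"
    and \<alpha>_nonnull: "\<And>n. n \<in> {1..N} \<Longrightarrow> AE t in lebesgue_on {x 0 .. x N}. \<alpha> n t \<noteq> 0"
    and b1: "in_Lp p {x 0 .. x N} b1" and b2: "in_Lp p {x 0 .. x N} b2"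
    and h1: "is_fractal_conv p N x a c \<alpha> (\<lambda>_. 0) b1 h1"
    and h2: "is_fractal_conv p N x a c \<alpha> (\<lambda>_. 0) b2 h2"
    and eq: "AE t in lebesgue_on {x 0 .. x N}. h1 t = h2 t"
  shows "AE t in lebesgue_on {x 0 .. x N}. b1 t = b2 t"
proof -
  let ?I = "{x 0 .. x N}" and ?L = "\<lambda>u. c 1 + a 1 * u"
  have N1: "1 \<in> {1..N}" using N by simp
  have x01: "x 0 < x 1" and x1N: "x 1 \<le> x N"
    using x_mono[of 0 1] x_mono[of 1 N] N by (auto simp: le_less)
  have L1: "a 1 * x 0 + c 1 = x 0" "a 1 * x N + c 1 = x 1"
    using L_left[OF N1] L_right[OF N1] by simp_all
  have a1: "a 1 \<noteq> 0" using first_map_pos[OF x01 x1N L1] by simp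
  have eq': "AE y in lebesgue. y \<in> ?I \<longrightarrow> h1 y = h2 y"
    using eq by (simp add: AE_restrict_space_iff)
  have \<alpha>1: "AE u in lebesgue. u \<in> ?I \<longrightarrow> \<alpha> 1 u \<noteq> 0"
    using \<alpha>_nonnull[OF N1] by (simp add: AE_restrict_space_iff)
  have "1 \<le> N" using N by simp
  note pullback = fractal_conv_zero_pullback_first_piece[OF h1 this a1] fractal_conv_zero_pullback_first_piece[OF h2 this a1]
  have "AE u in lebesgue. u \<in> ?I \<longrightarrow> b1 u = b2 u"
    using pullback AE_lebesgue_affine[OF a1 eq', of "c 1"] eq' \<alpha>1
  proof eventually_elim
    case (elim u)
    show ?case
    proof
      assume u: "u \<in> ?I"
      then have "?L u \<in> piece x 1" "?L u \<in> ?I"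
        using first_map_into_first_piece[OF x01 x1N L1 u] x1N unfolding piece_def by auto
      with elim u show "b1 u = b2 u" by auto
    qed
  qed
  then show ?thesis by (simp add: AE_restrict_space_iff)
qed

end
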